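(* Let $c\in\mathbb{R}\setminus\{0\}$ and let $\boldsymbol\eta_c:\mathbb{R}^2\to\mathbb{R}^2$ be $$\boldsymbol\eta_c(u,v)=\bigl(u^2+2cv,\ v^2+2cu\bigr).$$ Let $\mathbf y=(s_1,s_2)$ be a point in the four-image region of $\boldsymbol\eta_c$, i.e. the equation $\boldsymbol\eta_c(\mathbf x)=\mathbf y$ has exactly four distinct solutions $\mathbf x_i=(u_i,v_i)\in\mathbb{R}^2$, $i=1,\dots,4$, each with $\det(\mathrm{Jac}\,\boldsymbol\eta_c)(\mathbf x_i)\neq0$. Then, with $\mu_i=1/\det(\mathrm{Jac}\,\boldsymbol\eta_c)(\mathbf x_i)=\frac{1}{4(u_iv_i-c^2)}$, $$\mu_1+\mu_2+\mu_3+\mu_4=0.$$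
   Context: This map is the universal quantitative form of a one-parameter family of gravitational lensing maps near a hyperbolic umbilic caustic. Its critical curve is $uv=c^2$, and its caustic is $s_1=u^2+2c^3/u$, $s_2=2cu+c^4/u^2$; the four-image region is the region "inside the beak" of this caustic, where sources have exactly four preimages. *)

theory Defs
  imports Complex_Main
begin

definition eta :: "real \<Rightarrow> real \<times> real \<Rightarrow> real \<times> real" where
  "eta c = (\<lambda>(u, v). (u^2 + 2*c*v, v^2 + 2*c*u))"

text \<open>Determinant of the Jacobian matrix [[2u, 2c], [2c, 2v]] of eta c at (u,v).\<close>
definition jac_det :: "real \<Rightarrow> real \<times> real \<Rightarrow> real" where
  "jac_det c = (\<lambda>(u, v). (2*u) * (2*v) - (2*c) * (2*c))"

end

theory Submission imports Defs begin

(*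
  Eliminating v = (s1 - u^2)/(2c) from eta c (u,v) = (s1,s2) shows that the
  first coordinates u of the preimages of (s1,s2) are roots of the depressed quartic
      p(u) = u^4 - 2 s1 u^2 + 8 c^3 u + (s1^2 - 4 c^2 s2),
  and that along the preimage set  2c * jac_det = - p'(u).  Since v is determined by u, four
  distinct preimages give four distinct roots r1..r4 of p, so p factors as the product of
  the (x - ri) and p'(ri) is the product of the differences ri - rj (j ~= i).  The claim
  then reduces to the partial-fraction identity  sum_i 1/prod_{j~=i}(ri - rj) = 0.
*)

definition quartic :: "real \<Rightarrow> real \<Rightarrow> real \<Rightarrow> real \<Rightarrow> real" where
  "quartic a b e x = x^4 + a*x^2 + b*x + e"

definition quartic_deriv :: "real \<Rightarrow> real \<Rightarrow> real \<Rightarrow> real" where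
  "quartic_deriv a b x = 4*x^3 + 2*a*x + b"

text \<open>First divided difference: two distinct roots annihilate (p(x) - p(y))/(x - y).\<close>
lemma quartic_first_divided_difference:
  assumes "quartic a b e x = 0" "quartic a b e y = 0" "x \<noteq> y"
  shows "x^3 + x^2*y + x*y^2 + y^3 + a*(x + y) + b = 0"
proof -
  have "(x - y) * (x^3 + x^2*y + x*y^2 + y^3 + a*(x + y) + b) = quartic a b e x - quartic a b e y"
    unfolding quartic_def by algebra
  then show ?thesis using assms by simp
qed

text \<open>Second divided difference: three distinct roots annihilate it as well.\<close>
lemma quartic_second_divided_difference:
  assumes "quartic a b e x = 0" "quartic a b e y = 0" "quartic a b e z = 0"
    and "x \<noteq> y" "x \<noteq> z" "y \<noteq> z"
  shows "x^2 + y^2 + z^2 + x*y + x*z + y*z + a = 0"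
proof -
  have "(y - z) * (x^2 + y^2 + z^2 + x*y + x*z + y*z + a)
      = (x^3 + x^2*y + x*y^2 + y^3 + a*(x + y) + b) - (x^3 + x^2*z + x*z^2 + z^3 + a*(x + z) + b)"
    by algebra
  then show ?thesis
    using assms quartic_first_divided_difference[of a b e x y] quartic_first_divided_difference[of a b e x z]
    by simp
qed

text \<open>Four distinct roots of a depressed quartic sum to zero (no cubic term).\<close>
lemma quartic_root_sum:
  assumes "quartic a b e r1 = 0" "quartic a b e r2 = 0" "quartic a b e r3 = 0" "quartic a b e r4 = 0"
    and "distinct [r1, r2, r3, r4]"
  shows "r1 + r2 + r3 + r4 = 0"
proof -
  have "(r3 - r4) * (r1 + r2 + r3 + r4)
      = (r1^2 + r2^2 + r3^2 + r1*r2 + r1*r3 + r2*r3 + a) - (r1^2 + r2^2 + r4^2 + r1*r2 + r1*r4 + r2*r4 + a)"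
    by algebra
  also have "\<dots> = 0"
    using assms quartic_second_divided_difference[of a b e r1 r2 r3]
      quartic_second_divided_difference[of a b e r1 r2 r4]
    by simp
  finally show ?thesis using assms(5) by simp
qed

text \<open>At one of four distinct roots the derivative is the product of the root differences,
  as it would be read off from the factorisation p(x) = (x - r1)(x - r2)(x - r3)(x - r4).\<close>
lemma quartic_deriv_at_root:
  assumes "quartic a b e r1 = 0" "quartic a b e r2 = 0" "quartic a b e r3 = 0" "quartic a b e r4 = 0"
    and "distinct [r1, r2, r3, r4]"
  shows "quartic_deriv a b r1 = (r1 - r2) * (r1 - r3) * (r1 - r4)"
proof -
  have q: "r1^3 + r1^2*r2 + r1*r2^2 + r2^3 + a*(r1 + r2) + b = 0"
    using assms quartic_first_divided_difference[of a b e r1 r2] by simp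
  have t: "r1^2 + r2^2 + r3^2 + r1*r2 + r1*r3 + r2*r3 + a = 0"
    using assms quartic_second_divided_difference[of a b e r1 r2 r3] by simp
  have s: "r1 + r2 + r3 + r4 = 0"
    using assms quartic_root_sum by blast
  show ?thesis
    using q t s unfolding quartic_deriv_def by algebra
qed

text \<open>Partial fractions: for four distinct points the reciprocals of the products of
  differences sum to zero (the x^3-coefficient of the Lagrange interpolant of 1).\<close>
lemma reciprocal_difference_products_sum:
  fixes r1 r2 r3 r4 :: real
  assumes "distinct [r1, r2, r3, r4]"
  shows "1/((r1-r2)*(r1-r3)*(r1-r4)) + 1/((r2-r1)*(r2-r3)*(r2-r4))
       + 1/((r3-r1)*(r3-r2)*(r3-r4)) + 1/((r4-r1)*(r4-r2)*(r4-r3)) = 0"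
proof -
  have recip: "1/a = b/d" if "b \<noteq> 0" "d = a*b" for a b d :: real
    using that by simp
  define D where "D = (r1-r2)*(r1-r3)*(r1-r4)*(r2-r3)*(r2-r4)*(r3-r4)"
  have "1/((r1-r2)*(r1-r3)*(r1-r4)) = (r2-r3)*(r2-r4)*(r3-r4) / D"
    by (intro recip) (use assms in simp, simp add: D_def)
  moreover have "1/((r2-r1)*(r2-r3)*(r2-r4)) = -((r1-r3)*(r1-r4)*(r3-r4)) / D"
    by (intro recip) (use assms in simp, unfold D_def, algebra)
  moreover have "1/((r3-r1)*(r3-r2)*(r3-r4)) = (r1-r2)*(r1-r4)*(r2-r4) / D"
    by (intro recip) (use assms in simp, unfold D_def, algebra)
  moreover have "1/((r4-r1)*(r4-r2)*(r4-r3)) = -((r1-r2)*(r1-r3)*(r2-r3)) / D"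
    by (intro recip) (use assms in simp, unfold D_def, algebra)
  moreover have "(r2-r3)*(r2-r4)*(r3-r4) - (r1-r3)*(r1-r4)*(r3-r4)
      + (r1-r2)*(r1-r4)*(r2-r4) - (r1-r2)*(r1-r3)*(r2-r3) = 0"
    by algebra
  ultimately show ?thesis by (simp add: add_divide_distrib[symmetric] diff_divide_distrib[symmetric])
qed

lemma quartic_reciprocal_deriv_sum:
  assumes "finite R" "card R = 4" "\<forall>r\<in>R. quartic a b e r = 0"
  shows "(\<Sum>r\<in>R. 1 / quartic_deriv a b r) = 0"
proof -
  have "card R = Suc 3" using assms(2) by simp
  then obtain r1 B where R: "R = insert r1 B" "r1 \<notin> B" "card B = 3"
    unfolding card_Suc_eq by blast
  then obtain r2 r3 r4 where B: "B = {r2, r3, r4}" "r2 \<noteq> r3" "r3 \<noteq> r4" "r2 \<noteq> r4"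
    unfolding card_3_iff by blast
  have d: "distinct [r1, r2, r3, r4]" using R B by auto
  have roots: "quartic a b e r1 = 0" "quartic a b e r2 = 0" "quartic a b e r3 = 0" "quartic a b e r4 = 0"
    using assms(3) R B by auto
  have "(\<Sum>r\<in>R. 1 / quartic_deriv a b r)
      = 1 / quartic_deriv a b r1 + 1 / quartic_deriv a b r2
      + 1 / quartic_deriv a b r3 + 1 / quartic_deriv a b r4"
    using R B d by (simp add: add.assoc)
  also have "\<dots> = 1/((r1-r2)*(r1-r3)*(r1-r4)) + 1/((r2-r1)*(r2-r3)*(r2-r4))
       + 1/((r3-r1)*(r3-r2)*(r3-r4)) + 1/((r4-r1)*(r4-r2)*(r4-r3))"
    using roots d quartic_deriv_at_root[of a b e r1 r2 r3 r4] quartic_deriv_at_root[of a b e r2 r1 r3 r4]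
      quartic_deriv_at_root[of a b e r3 r1 r2 r4] quartic_deriv_at_root[of a b e r4 r1 r2 r3]
    by auto
  also have "\<dots> = 0"
    using reciprocal_difference_products_sum[OF d] .
  finally show ?thesis .
qed

definition eta_quartic :: "real \<Rightarrow> real \<times> real \<Rightarrow> real \<Rightarrow> real" where
  "eta_quartic c s = quartic (-2 * fst s) (8 * c^3) ((fst s)^2 - 4 * c^2 * snd s)"

lemma eta_preimage_root:
  assumes "eta c (u, v) = s"
  shows "eta_quartic c s u = 0"
proof -
  have "fst s = u^2 + 2*c*v" "snd s = v^2 + 2*c*u" using assms by (auto simp: eta_def)
  then show ?thesis unfolding eta_quartic_def quartic_def by algebra
qed

lemma eta_preimage_snd:
  assumes "c \<noteq> 0" "eta c (u, v) = s"
  shows "v = (fst s - u^2) / (2*c)"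
  using assms by (auto simp: eta_def field_simps)

lemma eta_preimage_fst_inj:
  assumes "c \<noteq> 0"
  shows "inj_on fst {x. eta c x = s}"
proof (rule inj_onI)
  fix x x' assume "x \<in> {x. eta c x = s}" "x' \<in> {x. eta c x = s}" "fst x = fst x'"
  moreover from this(1,2) have "eta c (fst x, snd x) = s" "eta c (fst x', snd x') = s"
    by simp_all
  ultimately show "x = x'"
    using eta_preimage_snd[OF assms] by (metis prod_eq_iff)
qed

lemma eta_jac_det_preimage:
  assumes "c \<noteq> 0" "eta c (u, v) = s"
  shows "1 / jac_det c (u, v) = (-2*c) * (1 / quartic_deriv (-2 * fst s) (8 * c^3) u)"
proof -
  have s1: "fst s = u^2 + 2*c*v" using assms(2) by (auto simp: eta_def)
  have "quartic_deriv (-2 * fst s) (8 * c^3) u = (-2*c) * jac_det c (u, v)"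
    unfolding s1 quartic_deriv_def jac_det_def by (simp add: algebra_simps power2_eq_square power3_eq_cube)
  then show ?thesis using assms(1) by simp
qed

theorem theorem1:
  fixes c :: real and y :: "real \<times> real"
  assumes "c \<noteq> 0"
    and "finite {x. eta c x = y}"
    and "card {x. eta c x = y} = 4"
    and "\<forall>x. eta c x = y \<longrightarrow> jac_det c x \<noteq> 0"
  shows "(\<Sum>x\<in>{x. eta c x = y}. 1 / jac_det c x) = 0"
proof -
  let ?S = "{x. eta c x = y}"
  let ?D = "quartic_deriv (-2 * fst y) (8 * c^3)"
  have inj: "inj_on fst ?S"
    using eta_preimage_fst_inj[OF assms(1)] .
  have roots: "\<forall>r \<in> fst ` ?S. eta_quartic c y r = 0"
    by (clarsimp, metis eta_preimage_root prod.collapse)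
  have "(\<Sum>x\<in>?S. 1 / jac_det c x) = (\<Sum>x\<in>?S. (-2*c) * (1 / ?D (fst x)))"
    using eta_jac_det_preimage[OF assms(1)] by (intro sum.cong) auto
  also have "\<dots> = (-2*c) * (\<Sum>r\<in>fst ` ?S. 1 / ?D r)"
    by (simp add: sum_distrib_left sum.reindex[OF inj])
  also have "(\<Sum>r\<in>fst ` ?S. 1 / ?D r) = 0"
    using quartic_reciprocal_deriv_sum[of "fst ` ?S"] roots assms(2,3) card_image[OF inj]
    unfolding eta_quartic_def by simp
  finally show ?thesis by simp
qed

end
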